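(* Let $H$ be an $r$-graph with $h$ vertices. If $H$ is not $2$-locally large, then $C_r(n,H)\le 2r+1$ for all $n$. If $H$ is $2$-locally large, then $$C_r(n,H)\ge c\left(\frac{\log^{(r)}(n)}{\log^{(r+1)}(n)}\right)^{\frac{1}{(r+1)^2}}$$ for some constant $c=c(r,h)>0$, where $\log^{(s)}(n)$ denotes the $s$-fold iterated logarithm of $n$.
   Context: An $r$-graph is an $r$-uniform hypergraph; $K_n^{(r)}$ is the complete $r$-graph on $n$ vertices. A copy of an $r$-graph $H$ in $K_n^{(r)}$ is a subhypergraph isomorphic to $H$. An $(n,r,H)$-local coloring with $k$ colors is a family of edge-colorings $f_v:E(K_n^{(r)})\to[k]$, one per vertex $v$, such that for every copy $T$ of $H$ there is $u\in V(T)$ with $f_u$ injective on $E(T)$. $C_r(n,H)$ is the minimum such $k$. Let $H$ be an $r$-graph on $m$ vertices and $\sigma:V(H)\to[m]$ a bijection. For $x\in V(H)$ and $1\le i\le r$, $T_x^i$ is the set of edges $e\ni x$ such that $\sigma(x)$ is the $i$-th smallest of the values $\sigma(v)$, $v\in e$. For $r+1\le i\le 2r+1$, $T_x^i$ is the set of edges $e\not\ni x$ such that $\sigma(x)$ is the $(i-r)$-th smallest among the values $\sigma(v)$, $v\in e\cup\{x\}$. $H$ is $2$-locally large if there exists a bijection $\sigma:V(H)\to[m]$ such that for every vertex $x\in V(H)$ some $T_x^i$, $i\in[2r+1]$, contains at least two edges. *)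

theory Defs
  imports Complex_Main
begin

definition r_graph :: "nat \<Rightarrow> nat set \<Rightarrow> nat set set \<Rightarrow> bool" where
  "r_graph r V E \<longleftrightarrow> finite V \<and> (\<forall>e\<in>E. e \<subseteq> V \<and> card e = r)"

text \<open>For r+1 \<le> i \<le> 2r+1: edges not containing x such that sigma x is the (i-r)-th
  smallest among the values on e \<union> {x}.\<close>
definition T_set :: "nat \<Rightarrow> (nat \<Rightarrow> nat) \<Rightarrow> nat set set \<Rightarrow> nat \<Rightarrow> nat \<Rightarrow> nat set set" where
  "T_set r \<sigma> E x i =
     (if i \<le> r then {e \<in> E. x \<in> e \<and> card {v \<in> e. \<sigma> v < \<sigma> x} + 1 = i}
      else {e \<in> E. x \<notin> e \<and> card {v \<in> e. \<sigma> v < \<sigma> x} + 1 = i - r})"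

definition two_locally_large :: "nat \<Rightarrow> nat set \<Rightarrow> nat set set \<Rightarrow> bool" where
  "two_locally_large r V E \<longleftrightarrow>
     (\<exists>\<sigma>. bij_betw \<sigma> V {1..card V} \<and>
          (\<forall>x\<in>V. \<exists>i\<in>{1..2*r+1}. card (T_set r \<sigma> E x i) \<ge> 2))"

text \<open>An (n,r,H)-local colouring with k colours: K_n^(r) has vertex set {0..<n};
  f v is the colouring of vertex v. Copies of H = (V,E) are exactly the images of H
  under injections phi : V -> {0..<n}; the copy has vertex set phi ` V and edge set
  the images of the edges.\<close>
definition local_coloring :: "nat \<Rightarrow> nat \<Rightarrow> nat set \<Rightarrow> nat set set \<Rightarrow> nat \<Rightarrow> (nat \<Rightarrow> nat set \<Rightarrow> nat) \<Rightarrow> bool" where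
  "local_coloring n r V E k f \<longleftrightarrow>
     (\<forall>v<n. \<forall>e. e \<subseteq> {..<n} \<and> card e = r \<longrightarrow> f v e \<in> {1..k}) \<and>
     (\<forall>\<phi>. inj_on \<phi> V \<and> \<phi> ` V \<subseteq> {..<n} \<longrightarrow>
        (\<exists>u\<in>\<phi> ` V. inj_on (f u) ((\<lambda>e. \<phi> ` e) ` E)))"

definition C_num :: "nat \<Rightarrow> nat \<Rightarrow> nat set \<Rightarrow> nat set set \<Rightarrow> nat" where
  "C_num r n V E = (LEAST k. \<exists>f. local_coloring n r V E k f)"

definition iter_log :: "nat \<Rightarrow> real \<Rightarrow> real" where
  "iter_log s x = (ln ^^ s) x"

end

theory Submission
  imports Defs "HOL-Library.FuncSet"
begin

text \<open>
  Upper bound: at a vertex v, colour an r-set e by the position of v in the sorted set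
  e \<union> {v}, recording also whether v \<in> e. For a copy \<phi> of H, order the vertices of H as
  \<phi> orders their images. As H is not 2-locally large, some vertex x has at most one edge in
  each class T_x^i, and an edge of T_x^i receives colour i at \<phi> x; so the colouring at \<phi> x is
  injective on the copy.

  Lower bound: given a local colouring f with k colours, colour each (r+1)-subset
  B = {b_0 < ... < b_r} of [n] by the tuple of colours f b_j (B - {b_l}) over the 2r+1 pairs
  (j, l) with l = j or l = r. The Erdos-Rado proof of Ramsey's theorem for (r+1)-uniform
  hypergraphs gives a monochromatic set of size h+1 as soon as n exceeds a tower of height r
  over k^(2r+1). Embed H into it, in the order \<sigma> witnessing 2-local largeness and below its
  top element t. An edge e of T_x^i is then coloured at \<phi> x by the entry (i-1, r) of the
  colour of \<phi> e \<union> {t} if x \<in> e, and by the entry (i-r-1, i-r-1) of the colour of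
  \<phi> e \<union> {\<phi> x} otherwise. So two edges of a class T_x^i with at least two edges get the
  same colour at \<phi> x, contradicting local injectivity. Hence n is bounded by the tower, and taking r logarithms gives
  log^(r) n \<le> C k^((r+1)^2), which is stronger than the claim (log^(r+1) n \<ge> 1).
\<close>

section \<open>Ranks in finite sets of naturals\<close>

definition rank_in :: "nat set \<Rightarrow> nat \<Rightarrow> nat" where
  "rank_in B b = card {y\<in>B. y < b}"

definition nth_in :: "nat set \<Rightarrow> nat \<Rightarrow> nat" where
  "nth_in B j = inv_into B (rank_in B) j"

lemma strict_mono_on_rank_in: "finite B \<Longrightarrow> strict_mono_on B (rank_in B)"
  unfolding rank_in_def by (intro strict_mono_onI psubset_card_mono) auto

lemma rank_in_less_iff:
  "finite B \<Longrightarrow> a \<in> B \<Longrightarrow> b \<in> B \<Longrightarrow> rank_in B a < rank_in B b \<longleftrightarrow> a < b"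
  by (rule strict_mono_on_less[OF strict_mono_on_rank_in])

lemma inj_on_rank_in: "finite B \<Longrightarrow> inj_on (rank_in B) B"
  by (simp add: strict_mono_on_imp_inj_on strict_mono_on_rank_in)

lemma rank_in_less_card:
  assumes "finite B" "b \<in> B"
  shows "rank_in B b < card B"
  unfolding rank_in_def using assms by (intro psubset_card_mono) auto

lemma rank_in_le_card: "finite B \<Longrightarrow> rank_in B b \<le> card B"
  unfolding rank_in_def by (rule card_mono) auto

lemma bij_betw_rank_in:
  assumes "finite B"
  shows "bij_betw (rank_in B) B {..<card B}"
proof -
  have "rank_in B ` B \<subseteq> {..<card B}"
    using rank_in_less_card[OF assms] by auto
  moreover have "card (rank_in B ` B) = card B"
    using inj_on_rank_in[OF assms] by (simp add: card_image)
  ultimately show ?thesis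
    using inj_on_rank_in[OF assms] by (simp add: bij_betw_def card_subset_eq)
qed

lemma
  assumes "finite B" "j < card B"
  shows nth_in_mem: "nth_in B j \<in> B"
    and rank_in_nth_in: "rank_in B (nth_in B j) = j"
proof -
  have "j \<in> rank_in B ` B"
    using bij_betw_rank_in[OF assms(1)] assms(2) by (simp add: bij_betw_def)
  then show "nth_in B j \<in> B" "rank_in B (nth_in B j) = j"
    unfolding nth_in_def by (auto simp: inv_into_into f_inv_into_f)
qed

lemma nth_in_rank_in: "finite B \<Longrightarrow> b \<in> B \<Longrightarrow> nth_in B (rank_in B b) = b"
  unfolding nth_in_def by (simp add: inj_on_rank_in inv_into_f_f)

lemma rank_in_image:
  assumes "inj_on \<phi> V" "e \<subseteq> V" "x \<in> V"
    and "\<forall>v\<in>V. \<sigma> v < \<sigma> x \<longleftrightarrow> \<phi> v < \<phi> x"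
  shows "rank_in (\<phi> ` e) (\<phi> x) = card {v\<in>e. \<sigma> v < \<sigma> x}"
proof -
  have "{y\<in>\<phi> ` e. y < \<phi> x} = \<phi> ` {v\<in>e. \<sigma> v < \<sigma> x}"
    using assms(2,4) by auto
  moreover have "inj_on \<phi> {v\<in>e. \<sigma> v < \<sigma> x}"
    by (rule inj_on_subset[OF assms(1)]) (use assms(2) in auto)
  ultimately show ?thesis
    unfolding rank_in_def by (simp add: card_image)
qed

lemma order_labelling_exists:
  fixes \<phi> :: "'a \<Rightarrow> nat"
  assumes "finite V" "inj_on \<phi> V"
  shows "\<exists>\<sigma>. bij_betw \<sigma> V {1..card V} \<and> (\<forall>v\<in>V. \<forall>x\<in>V. \<sigma> v < \<sigma> x \<longleftrightarrow> \<phi> v < \<phi> x)"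
proof (intro exI conjI)
  let ?\<sigma> = "\<lambda>x. rank_in (\<phi> ` V) (\<phi> x) + 1"
  have "bij_betw \<phi> V (\<phi> ` V)"
    using assms(2) by (rule inj_on_imp_bij_betw)
  moreover have "bij_betw (rank_in (\<phi> ` V)) (\<phi> ` V) {..<card V}"
    using bij_betw_rank_in[of "\<phi> ` V"] assms by (simp add: card_image)
  moreover have "bij_betw Suc {..<card V} {1..card V}"
    by (simp add: bij_betw_def image_Suc_lessThan)
  ultimately have "bij_betw (Suc \<circ> (rank_in (\<phi> ` V) \<circ> \<phi>)) V {1..card V}"
    by (intro bij_betw_trans)
  then show "bij_betw ?\<sigma> V {1..card V}"
    by (simp add: comp_def)
  show "\<forall>v\<in>V. \<forall>x\<in>V. ?\<sigma> v < ?\<sigma> x \<longleftrightarrow> \<phi> v < \<phi> x"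
    using rank_in_less_iff[of "\<phi> ` V"] assms(1) by auto
qed

section \<open>Graphs that are not 2-locally large\<close>

lemma r_graph_finite_edges: "r_graph r V E \<Longrightarrow> finite E"
  unfolding r_graph_def by (rule finite_subset[of _ "Pow V"]) auto

definition position_colour :: "nat \<Rightarrow> nat \<Rightarrow> nat set \<Rightarrow> nat" where
  "position_colour r v e = (if v \<in> e then rank_in e v + 1 else r + rank_in e v + 1)"

lemma position_colour_range:
  assumes "finite e" "card e = r"
  shows "position_colour r v e \<in> {1..2*r+1}"
  using rank_in_le_card[OF assms(1), of v] rank_in_less_card[OF assms(1), of v] assms(2)
  unfolding position_colour_def by auto

lemma mem_T_set_position_colour:
  assumes "r_graph r V E" "inj_on \<phi> V" "x \<in> V" "e \<in> E"
    and "\<forall>v\<in>V. \<sigma> v < \<sigma> x \<longleftrightarrow> \<phi> v < \<phi> x"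
  shows "e \<in> T_set r \<sigma> E x (position_colour r (\<phi> x) (\<phi> ` e))"
proof -
  have eV: "e \<subseteq> V" and card_e: "card e = r" "finite e"
    using assms(1,4) unfolding r_graph_def by (auto intro: finite_subset)
  have rank: "rank_in (\<phi> ` e) (\<phi> x) = card {v\<in>e. \<sigma> v < \<sigma> x}"
    using rank_in_image[OF assms(2) eV assms(3,5)] .
  have mem: "\<phi> x \<in> \<phi> ` e \<longleftrightarrow> x \<in> e"
    using assms(2,3) eV by (auto simp: inj_on_def)
  have "x \<in> e \<Longrightarrow> rank_in (\<phi> ` e) (\<phi> x) < r"
    using rank_in_less_card[of "\<phi> ` e" "\<phi> x"] card_e card_image_le[of e \<phi>] by auto
  then show ?thesis
    using assms(4) rank mem unfolding T_set_def position_colour_def by auto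
qed

lemma inj_on_if_classes_small:
  assumes "\<And>e. e \<in> E \<Longrightarrow> e \<in> T (g e)" "\<And>i. finite (T i)" "\<And>e. e \<in> E \<Longrightarrow> card (T (g e)) < 2"
  shows "inj_on g E"
proof (rule inj_onI)
  fix a b assume "a \<in> E" "b \<in> E" "g a = g b"
  then have "a \<in> T (g a)" "b \<in> T (g a)" "card (T (g a)) \<le> Suc 0"
    using assms(1,3) by fastforce+
  then show "a = b"
    using card_le_Suc0_iff_eq[OF assms(2)] by blast
qed

lemma local_coloring_position_colour:
  assumes H: "r_graph r V E" and not_large: "\<not> two_locally_large r V E"
  shows "local_coloring n r V E (2*r+1) (position_colour r)"
  unfolding local_coloring_def
proof (intro conjI allI impI)
  fix v e assume "e \<subseteq> {..<n} \<and> card e = r"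
  then show "position_colour r v e \<in> {1..2*r+1}"
    by (intro position_colour_range) (auto intro: finite_subset)
next
  fix \<phi> assume \<phi>: "inj_on \<phi> V \<and> \<phi> ` V \<subseteq> {..<n}"
  have finV: "finite V" and edge: "\<And>e. e \<in> E \<Longrightarrow> e \<subseteq> V \<and> card e = r"
    using H unfolding r_graph_def by auto
  obtain \<sigma> where \<sigma>: "bij_betw \<sigma> V {1..card V}" "\<forall>v\<in>V. \<forall>x\<in>V. \<sigma> v < \<sigma> x \<longleftrightarrow> \<phi> v < \<phi> x"
    using order_labelling_exists[OF finV conjunct1[OF \<phi>]] by blast
  then obtain x where x: "x \<in> V" and small: "\<And>i. i \<in> {1..2*r+1} \<Longrightarrow> card (T_set r \<sigma> E x i) < 2"
    using not_large unfolding two_locally_large_def not_le[symmetric] by auto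
  let ?g = "\<lambda>e. position_colour r (\<phi> x) (\<phi> ` e)"
  have "inj_on ?g E"
  proof (rule inj_on_if_classes_small)
    show "e \<in> T_set r \<sigma> E x (?g e)" if "e \<in> E" for e
      using \<phi> \<sigma>(2) x by (intro mem_T_set_position_colour[OF H _ x that]) auto
    show "finite (T_set r \<sigma> E x i)" for i
      using r_graph_finite_edges[OF H] unfolding T_set_def by auto
    show "card (T_set r \<sigma> E x (?g e)) < 2" if "e \<in> E" for e
    proof (rule small, rule position_colour_range)
      show "finite (\<phi> ` e)"
        using edge[OF that] finV by (auto intro: finite_subset)
      show "card (\<phi> ` e) = r"
        using edge[OF that] \<phi> by (auto simp: card_image inj_on_subset)
    qed
  qed
  then have "inj_on (position_colour r (\<phi> x)) ((\<lambda>e. \<phi> ` e) ` E)"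
    by (intro inj_on_imageI) (simp add: comp_def)
  then show "\<exists>u\<in>\<phi> ` V. inj_on (position_colour r u) ((\<lambda>e. \<phi> ` e) ` E)"
    using x by blast
qed

lemma C_num_le_if_not_two_locally_large:
  assumes "r_graph r V E" "\<not> two_locally_large r V E"
  shows "C_num r n V E \<le> 2 * r + 1"
  unfolding C_num_def using local_coloring_position_colour[OF assms] by (intro Least_le) blast

section \<open>Ramsey's theorem for hypergraphs with an explicit bound\<close>

definition end_homogeneous :: "nat \<Rightarrow> (nat set \<Rightarrow> 'c) \<Rightarrow> nat set \<Rightarrow> nat set \<Rightarrow> bool" where
  "end_homogeneous s \<chi> Y S \<longleftrightarrow> (\<forall>A. A \<subseteq> Y \<and> card A = s \<longrightarrow>
     (\<forall>y\<in>Y \<union> S. \<forall>y'\<in>Y \<union> S. (\<forall>a\<in>A. a < y) \<longrightarrow> (\<forall>a\<in>A. a < y') \<longrightarrow>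
        \<chi> (insert y A) = \<chi> (insert y' A)))"

lemma card_subsets_containing_le:
  assumes "finite Y" "card Y \<le> L"
  shows "card {A. A \<subseteq> insert a Y \<and> a \<in> A \<and> card A = s} \<le> L ^ (s - 1)"
proof -
  have "{A. A \<subseteq> insert a Y \<and> a \<in> A \<and> card A = s} \<subseteq> insert a ` {B. B \<subseteq> Y \<and> card B = s - 1}"
  proof
    fix A assume A: "A \<in> {A. A \<subseteq> insert a Y \<and> a \<in> A \<and> card A = s}"
    then have "finite A"
      using assms(1) finite_subset by auto
    with A have "A - {a} \<subseteq> Y" "card (A - {a}) = s - 1" "A = insert a (A - {a})"
      by auto
    then show "A \<in> insert a ` {B. B \<subseteq> Y \<and> card B = s - 1}"
      by blast
  qed
  then have "card {A. A \<subseteq> insert a Y \<and> a \<in> A \<and> card A = s}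
      \<le> card (insert a ` {B. B \<subseteq> Y \<and> card B = s - 1})"
    by (intro card_mono) (simp_all add: assms(1))
  also have "\<dots> \<le> card {B. B \<subseteq> Y \<and> card B = s - 1}"
    by (rule card_image_le) (simp add: assms(1))
  also have "\<dots> = card Y choose (s - 1)"
    by (rule n_subsets[OF assms(1)])
  also have "\<dots> \<le> card Y ^ (s - 1)"
    by (cases "s - 1 \<le> card Y") (simp_all add: binomial_le_pow binomial_eq_0)
  also have "\<dots> \<le> L ^ (s - 1)"
    using assms(2) by (rule power_mono) simp
  finally show ?thesis .
qed

text \<open>
  One step of the Erdos-Rado construction: Y is extended by a = Min S, and the reservoir shrinks
  to a largest class of points y inducing the same colouring A \<mapsto> \<chi> (insert y A) on the
  s-sets A \<subseteq> insert a Y through a. There are at most L^(s-1) such A, hence at most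
  K^(L^(s-1)) classes.
\<close>
lemma end_homogeneous_grow:
  fixes \<chi> :: "nat set \<Rightarrow> 'c"
  assumes C: "finite C" "card C \<le> K" "1 \<le> K"
    and S: "finite S" "2 * K ^ (L ^ (s - 1)) * P \<le> card S" "1 \<le> P"
    and Y: "finite Y" "card Y \<le> L" "end_homogeneous s \<chi> Y S" "\<forall>y\<in>Y. \<forall>z\<in>S. y < z"
    and col: "\<forall>A. A \<subseteq> Y \<union> S \<and> card A = Suc s \<longrightarrow> \<chi> A \<in> C"
  obtains a S' where "a \<in> S" "S' \<subseteq> S - {a}" "P \<le> card S'"
    "end_homogeneous s \<chi> (insert a Y) S'" "\<forall>y\<in>insert a Y. \<forall>z\<in>S'. y < z"
proof -
  define M where "M = K ^ (L ^ (s - 1))"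
  have M: "1 \<le> M"
    using C(3) unfolding M_def by simp
  have MP: "1 \<le> M * P" "2 * (M * P) \<le> card S"
    using M S(2,3) unfolding M_def by (simp_all add: mult.assoc)
  then have "2 \<le> card S"
    by linarith
  then have "S \<noteq> {}"
    by auto
  define a where "a = Min S"
  have aS: "a \<in> S" and a_min: "\<And>y. y \<in> S \<Longrightarrow> a \<le> y"
    unfolding a_def using S(1) \<open>S \<noteq> {}\<close> by auto
  define S' where "S' = S - {a}"
  have S': "finite S'" "card S' = card S - 1"
    unfolding S'_def using S(1) aS by auto
  with \<open>2 \<le> card S\<close> have "S' \<noteq> {}"
    by auto
  define D where "D = {A. A \<subseteq> insert a Y \<and> a \<in> A \<and> card A = s}"
  have "finite D"
    unfolding D_def by (rule finite_subset[of _ "Pow (insert a Y)"]) (use Y(1) in auto)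
  define F where "F = D \<rightarrow>\<^sub>E C"
  have "card F = card C ^ card D"
    unfolding F_def using \<open>finite D\<close> by (simp add: card_PiE)
  also have "\<dots> \<le> K ^ card D"
    using C(2) by (rule power_mono) simp
  also have "\<dots> \<le> M"
    unfolding M_def D_def by (rule power_increasing[OF card_subsets_containing_le[OF Y(1,2)] C(3)])
  finally have card_F: "card F \<le> M" .
  define \<psi> where "\<psi> y = restrict (\<lambda>A. \<chi> (insert y A)) D" for y
  have "\<psi> \<in> S' \<rightarrow> F"
  proof
    fix y assume y: "y \<in> S'"
    have "\<chi> (insert y A) \<in> C" if "A \<in> D" for A
    proof -
      have "A \<subseteq> insert a Y" "card A = s" "finite A"
        using that Y(1) unfolding D_def by (auto intro: finite_subset)
      moreover have "y \<notin> A"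
        using that y Y(4) unfolding D_def S'_def by auto
      ultimately have "insert y A \<subseteq> Y \<union> S" "card (insert y A) = Suc s"
        using y aS unfolding S'_def by auto
      then show ?thesis
        using col by blast
    qed
    then show "\<psi> y \<in> F"
      unfolding F_def \<psi>_def by auto
  qed
  then obtain c where "c \<in> F" and card_S': "card S' \<le> card (\<psi> -` {c} \<inter> S') * card F"
    using pigeonhole_card[of \<psi> S' F] S' \<open>S' \<noteq> {}\<close> \<open>finite D\<close> C(1) unfolding F_def
    by (auto simp: finite_PiE)
  define S1 where "S1 = \<psi> -` {c} \<inter> S'"
  have "P \<le> card S1"
  proof (rule ccontr)
    assume "\<not> P \<le> card S1"
    then have "M * (card S1 + 1) \<le> M * P"
      by (intro mult_le_mono2) simp
    moreover have "card S - 1 \<le> M * card S1"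
      using le_trans[OF card_S' mult_le_mono2[OF card_F]] S'(2) unfolding S1_def
      by (simp add: mult.commute)
    ultimately show False
      using MP M by (simp add: algebra_simps)
  qed
  moreover have "end_homogeneous s \<chi> (insert a Y) S1"
    unfolding end_homogeneous_def
  proof (intro allI impI ballI)
    fix A y y' assume A: "A \<subseteq> insert a Y \<and> card A = s"
      and y: "y \<in> insert a Y \<union> S1" "\<forall>b\<in>A. b < y"
      and y': "y' \<in> insert a Y \<union> S1" "\<forall>b\<in>A. b < y'"
    show "\<chi> (insert y A) = \<chi> (insert y' A)"
    proof (cases "a \<in> A")
      case True
      then have "a < y" "a < y'"
        using y(2) y'(2) by auto
      then have "y \<notin> Y" "y' \<notin> Y"
        using Y(4) aS by (meson less_asym)+
      with \<open>a < y\<close> \<open>a < y'\<close> have "y \<in> S1" "y' \<in> S1"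
        using y(1) y'(1) by auto
      moreover have "A \<in> D"
        using A True unfolding D_def by auto
      ultimately have "\<psi> y A = \<psi> y' A"
        unfolding S1_def by simp
      with \<open>A \<in> D\<close> show ?thesis
        unfolding \<psi>_def by simp
    next
      case False
      then have "A \<subseteq> Y" "y \<in> Y \<union> S" "y' \<in> Y \<union> S"
        using A y y' aS unfolding S1_def S'_def by auto
      then show ?thesis
        using Y(3) A y(2) y'(2) unfolding end_homogeneous_def by blast
    qed
  qed
  moreover have "\<forall>y\<in>insert a Y. \<forall>z\<in>S1. y < z"
    using Y(4) a_min unfolding S1_def S'_def by fastforce
  moreover have "S1 \<subseteq> S - {a}"
    unfolding S1_def S'_def by auto
  ultimately show ?thesis
    using that aS by blast
qed

lemma end_homogeneous_extend:
  fixes \<chi> :: "nat set \<Rightarrow> 'c"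
  assumes C: "finite C" "card C \<le> K" "1 \<le> K"
  shows "finite S \<Longrightarrow> finite Y \<Longrightarrow> end_homogeneous s \<chi> Y S \<Longrightarrow> \<forall>y\<in>Y. \<forall>z\<in>S. y < z \<Longrightarrow>
    card Y + j \<le> L \<Longrightarrow> (2 * K ^ (L ^ (s - 1))) ^ j \<le> card S \<Longrightarrow>
    \<forall>A. A \<subseteq> Y \<union> S \<and> card A = Suc s \<longrightarrow> \<chi> A \<in> C \<Longrightarrow>
    \<exists>Y'. Y \<subseteq> Y' \<and> Y' \<subseteq> Y \<union> S \<and> card Y' = card Y + j \<and> end_homogeneous s \<chi> Y' {}"
proof (induction j arbitrary: Y S)
  case 0
  then show ?case
    by (intro exI[of _ Y]) (auto simp: end_homogeneous_def)
next
  case (Suc j)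
  let ?P = "(2 * K ^ (L ^ (s - 1))) ^ j"
  have "2 * K ^ (L ^ (s - 1)) * ?P \<le> card S" "1 \<le> ?P" "card Y \<le> L"
    using Suc.prems(5,6) C(3) by auto
  then obtain a S' where a: "a \<in> S" "S' \<subseteq> S - {a}" "?P \<le> card S'"
    and hom: "end_homogeneous s \<chi> (insert a Y) S'" "\<forall>y\<in>insert a Y. \<forall>z\<in>S'. y < z"
    using end_homogeneous_grow[OF C Suc.prems(1) _ _ Suc.prems(2) _ Suc.prems(3,4,7)] by blast
  have "a \<notin> Y"
    using a(1) Suc.prems(4) by blast
  then have "card (insert a Y) + j \<le> L"
    using Suc.prems(2,5) by simp
  moreover have "finite S'" "finite (insert a Y)"
    using a(2) Suc.prems(1,2) by (auto intro: finite_subset)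
  moreover have "\<forall>A. A \<subseteq> insert a Y \<union> S' \<and> card A = Suc s \<longrightarrow> \<chi> A \<in> C"
    using Suc.prems(7) a(1,2) by blast
  ultimately obtain Y' where "insert a Y \<subseteq> Y'" "Y' \<subseteq> insert a Y \<union> S'"
      "card Y' = card (insert a Y) + j" "end_homogeneous s \<chi> Y' {}"
    using Suc.IH[OF _ _ hom(1) hom(2) _ a(3)] by blast
  then show ?case
    using a(1,2) \<open>a \<notin> Y\<close> Suc.prems(2) by (intro exI[of _ Y']) auto
qed

lemma end_homogeneous_subset_exists:
  fixes \<chi> :: "nat set \<Rightarrow> 'c"
  assumes "finite C" "card C \<le> K" "1 \<le> K" "1 \<le> s"
    and "finite X" "(2 * K ^ (L ^ (s - 1))) ^ L \<le> card X"
    and "\<forall>A. A \<subseteq> X \<and> card A = Suc s \<longrightarrow> \<chi> A \<in> C"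
  obtains Y where "Y \<subseteq> X" "card Y = L" "end_homogeneous s \<chi> Y {}"
proof -
  have "end_homogeneous s \<chi> {} X"
    using assms(4) unfolding end_homogeneous_def by auto
  then show ?thesis
    using end_homogeneous_extend[OF assms(1-3) assms(5), of "{}" s \<chi> L L] assms(6,7) that by auto
qed

lemma end_homogeneous_replace_top:
  assumes "finite Y" "end_homogeneous s \<chi> Y {}" "z \<in> Y" "\<forall>y\<in>Y. y \<le> z"
    and "B \<subseteq> Y - {z}" "card B = Suc s"
  shows "\<chi> B = \<chi> (insert z (B - {Max B}))"
proof -
  have "finite B" "B \<noteq> {}"
    using assms(1,5,6) by (auto intro: finite_subset)
  then have "Max B \<in> B" and below_max: "\<forall>a\<in>B - {Max B}. a < Max B"
    by (auto simp: order.strict_iff_order)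
  have "card (B - {Max B}) = s"
    using assms(6) \<open>finite B\<close> \<open>Max B \<in> B\<close> by simp
  moreover have "B - {Max B} \<subseteq> Y" "Max B \<in> Y" "\<forall>a\<in>B - {Max B}. a < z"
    using assms(4,5) \<open>Max B \<in> B\<close> by (auto simp: order.strict_iff_order)
  ultimately have "\<chi> (insert (Max B) (B - {Max B})) = \<chi> (insert z (B - {Max B}))"
    using assms(2,3) below_max unfolding end_homogeneous_def by blast
  then show ?thesis
    using \<open>Max B \<in> B\<close> by (simp add: insert_absorb)
qed

text \<open>
  With L = ramsey_bound (s+1) K m + 1, the (2 K^(L^s))^L points of ramsey_bound (s+2) K m
  contain an end-homogeneous set of size L, whose top element reduces the colouring of
  (s+2)-sets to one of (s+1)-sets.
\<close>
fun ramsey_bound :: "nat \<Rightarrow> nat \<Rightarrow> nat \<Rightarrow> nat" where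
  "ramsey_bound 0 K m = m"
| "ramsey_bound (Suc 0) K m = K * m"
| "ramsey_bound (Suc (Suc s)) K m =
     2 ^ (ramsey_bound (Suc s) K m + 1) * K ^ ((ramsey_bound (Suc s) K m + 1) ^ Suc s)"

lemma ramsey_singletons:
  fixes \<chi> :: "nat set \<Rightarrow> 'c"
  assumes "finite C" "card C \<le> K" "1 \<le> K" "finite X" "K * m \<le> card X" "\<forall>y\<in>X. \<chi> {y} \<in> C"
  shows "\<exists>Z\<subseteq>X. card Z = m \<and> (\<exists>c. \<forall>y\<in>Z. \<chi> {y} = c)"
proof (cases "X = {}")
  case True
  then show ?thesis
    using assms(3,5) by simp
next
  case False
  then have "C \<noteq> {}"
    using assms(6) by blast
  then obtain c where "c \<in> C" and c: "card X \<le> card ((\<lambda>y. \<chi> {y}) -` {c} \<inter> X) * card C"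
    using pigeonhole_card[of "\<lambda>y. \<chi> {y}" X C] assms(1,4,6) by blast
  define Z' where "Z' = (\<lambda>y. \<chi> {y}) -` {c} \<inter> X"
  have "K * m \<le> card Z' * K"
    using assms(5) c mult_le_mono2[OF assms(2), of "card Z'"] unfolding Z'_def by linarith
  then have "m \<le> card Z'"
    using assms(3) by (simp add: mult.commute)
  then obtain Z where "Z \<subseteq> Z'" "card Z = m"
    by (meson obtain_subset_with_card_n)
  moreover have "Z \<subseteq> X" "\<forall>y\<in>Z. \<chi> {y} = c"
    using \<open>Z \<subseteq> Z'\<close> unfolding Z'_def by auto
  ultimately show ?thesis
    by (intro exI[of _ Z]) auto
qed

theorem ramsey_hypergraph:
  fixes \<chi> :: "nat set \<Rightarrow> 'c"
  assumes C: "finite C" "card C \<le> K" "1 \<le> K"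
  shows "1 \<le> s \<Longrightarrow> finite X \<Longrightarrow> ramsey_bound s K m \<le> card X \<Longrightarrow>
    \<forall>A. A \<subseteq> X \<and> card A = s \<longrightarrow> \<chi> A \<in> C \<Longrightarrow>
    \<exists>Z\<subseteq>X. card Z = m \<and> (\<exists>c. \<forall>A. A \<subseteq> Z \<and> card A = s \<longrightarrow> \<chi> A = c)"
proof (induction s arbitrary: X \<chi> rule: nat_induct_at_least)
  case base
  then obtain Z c where "Z \<subseteq> X" "card Z = m" "\<forall>y\<in>Z. \<chi> {y} = c"
    using ramsey_singletons[OF C, of X m \<chi>] by auto
  moreover have "\<chi> A = c" if "A \<subseteq> Z" "card A = 1" for A
    using that calculation(3) by (auto simp: card_1_singleton_iff)
  ultimately show ?case
    by (intro exI[of _ Z]) auto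
next
  case (Suc s)
  define L where "L = ramsey_bound s K m + 1"
  obtain s0 where s0: "s = Suc s0"
    using Suc.hyps by (cases s) auto
  have "(2 * K ^ (L ^ (s - 1))) ^ L = 2 ^ L * K ^ (L ^ s0 * L)"
    by (simp add: power_mult_distrib power_mult s0)
  also have "L ^ s0 * L = L ^ s"
    by (simp add: s0 mult.commute)
  finally have "(2 * K ^ (L ^ (s - 1))) ^ L = ramsey_bound (Suc s) K m"
    unfolding L_def s0 by simp
  then obtain Y where Y: "Y \<subseteq> X" "card Y = L" "end_homogeneous s \<chi> Y {}"
    using end_homogeneous_subset_exists[OF C Suc.hyps Suc.prems(1), of L \<chi>] Suc.prems(2,3) by auto
  have "finite Y" "Y \<noteq> {}"
    using Y(1,2) Suc.prems(1) unfolding L_def by (auto intro: finite_subset)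
  define z where "z = Max Y"
  have z: "z \<in> Y" "\<forall>y\<in>Y. y \<le> z"
    unfolding z_def using \<open>finite Y\<close> \<open>Y \<noteq> {}\<close> by auto
  have "finite (Y - {z})" "card (Y - {z}) = ramsey_bound s K m"
    using \<open>finite Y\<close> z Y(2) unfolding L_def by auto
  moreover have "\<forall>A. A \<subseteq> Y - {z} \<and> card A = s \<longrightarrow> \<chi> (insert z A) \<in> C"
  proof (intro allI impI)
    fix A assume A: "A \<subseteq> Y - {z} \<and> card A = s"
    then have "finite A" "z \<notin> A"
      using \<open>finite Y\<close> by (auto intro: finite_subset)
    with A have "insert z A \<subseteq> X" "card (insert z A) = Suc s"
      using z(1) Y(1) by auto
    then show "\<chi> (insert z A) \<in> C"
      using Suc.prems(3) by blast
  qed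
  ultimately obtain Z c where Z: "Z \<subseteq> Y - {z}" "card Z = m"
    and hom: "\<forall>A. A \<subseteq> Z \<and> card A = s \<longrightarrow> \<chi> (insert z A) = c"
    using Suc.IH[of "Y - {z}" "\<lambda>A. \<chi> (insert z A)"] by auto
  have "\<chi> B = c" if "B \<subseteq> Z" "card B = Suc s" for B
  proof -
    have "\<chi> B = \<chi> (insert z (B - {Max B}))"
      using end_homogeneous_replace_top[OF \<open>finite Y\<close> Y(3) z] that Z(1) by blast
    also have "\<dots> = c"
    proof -
      have "finite B" "B \<noteq> {}"
        using that Z(1) \<open>finite Y\<close> by (auto intro: finite_subset)
      then have "card (B - {Max B}) = s"
        using that(2) by simp
      then show ?thesis
        using hom that(1) by blast
    qed
    finally show ?thesis .
  qed
  then show ?case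
    using Z Y(1) by (intro exI[of _ Z]) auto
qed

section \<open>Towers of exponentials\<close>

lemma exp_iter_mono: "x \<le> y \<Longrightarrow> (exp ^^ j) x \<le> (exp ^^ j) (y::real)"
  by (induction j) auto

lemma exp_iter_nonneg: "0 \<le> x \<Longrightarrow> 0 \<le> (exp ^^ j) (x::real)"
  by (induction j) auto

lemma exp_iter_ge_add: "x + real j \<le> (exp ^^ j) (x::real)"
proof (induction j)
  case (Suc j)
  have "x + real (Suc j) \<le> 1 + (exp ^^ j) x"
    using Suc by simp
  also have "\<dots> \<le> (exp ^^ Suc j) x"
    by simp
  finally show ?case .
qed simp

lemma exp_plus_le_exp_add:
  assumes "0 \<le> x" "0 \<le> (c::real)"
  shows "exp x + c \<le> exp (x + c)"
proof -
  have "exp x + c \<le> exp x * (1 + c)"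
    using assms mult_left_mono[of 1 "exp x" c] by (simp add: algebra_simps)
  also have "\<dots> \<le> exp x * exp c"
    using exp_ge_add_one_self[of c] by simp
  finally show ?thesis
    by (simp add: exp_add)
qed

lemma exp_iter_plus_le:
  "0 \<le> x \<Longrightarrow> 0 \<le> c \<Longrightarrow> (exp ^^ j) x + c \<le> (exp ^^ j) (x + (c::real))"
proof (induction j)
  case (Suc j)
  have "(exp ^^ Suc j) x + c \<le> exp ((exp ^^ j) x + c)"
    using exp_plus_le_exp_add[OF exp_iter_nonneg[OF Suc.prems(1)] Suc.prems(2)] by simp
  also have "\<dots> \<le> (exp ^^ Suc j) (x + c)"
    using Suc by simp
  finally show ?case .
qed simp

lemma exp_iter_scale_le:
  assumes "1 \<le> d" "1 \<le> x"
  shows "d * (exp ^^ j) x \<le> (exp ^^ j) (d * (x::real))"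
proof (cases j)
  case (Suc i)
  have "ln d \<le> (d - 1) * x"
    using ln_le_minus_one[of d] mult_left_mono[of 1 x "d - 1"] assms by simp
  then have "x + ln d \<le> d * x"
    by (simp add: algebra_simps)
  have "d * (exp ^^ j) x = exp ((exp ^^ i) x + ln d)"
    using Suc assms(1) by (simp add: exp_add)
  also have "\<dots> \<le> exp ((exp ^^ i) (x + ln d))"
    using exp_iter_plus_le[of x "ln d" i] assms by simp
  also have "\<dots> \<le> exp ((exp ^^ i) (d * x))"
    using exp_iter_mono[OF \<open>x + ln d \<le> d * x\<close>] by simp
  finally show ?thesis
    using Suc by simp
qed simp

lemma exp_iter_power_le:
  assumes "1 \<le> d" "1 \<le> x"
  shows "((exp ^^ Suc j) x) ^ d \<le> (exp ^^ Suc j) (real d * (x::real))"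
proof -
  have "((exp ^^ Suc j) x) ^ d = exp (real d * (exp ^^ j) x)"
    by (simp add: exp_of_nat_mult)
  also have "\<dots> \<le> exp ((exp ^^ j) (real d * x))"
    using exp_iter_scale_le[of "real d" x j] assms by simp
  finally show ?thesis
    by simp
qed

lemma mult_exp_iter_le:
  assumes "1 \<le> c" "0 \<le> x"
  shows "c * (exp ^^ Suc j) x \<le> (exp ^^ Suc j) (x + (c::real))"
proof -
  have "c * (exp ^^ Suc j) x = exp ((exp ^^ j) x + ln c)"
    using assms(1) by (simp add: exp_add)
  also have "\<dots> \<le> exp ((exp ^^ j) x + c)"
    using assms(1) ln_le_minus_one[of c] by simp
  also have "\<dots> \<le> (exp ^^ Suc j) (x + c)"
    using exp_iter_plus_le[of x c j] assms by simp
  finally show ?thesis .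
qed

lemma ln_iter_ge: "(exp ^^ j) t \<le> x \<Longrightarrow> t \<le> (ln ^^ j) (x::real)"
proof (induction j arbitrary: t)
  case (Suc j)
  have "exp t \<le> (ln ^^ j) x"
    using Suc by (simp add: funpow_Suc_right del: funpow.simps)
  then show ?case
    using ln_mono[of "exp t" "(ln ^^ j) x"] by simp
qed simp

lemma ln_iter_le:
  "(\<forall>i<j. 0 < (ln ^^ i) x) \<Longrightarrow> x \<le> (exp ^^ j) y \<Longrightarrow> (ln ^^ j) (x::real) \<le> y"
proof (induction j arbitrary: y)
  case (Suc j)
  have "(ln ^^ j) x \<le> exp y"
    using Suc by (simp add: funpow_Suc_right del: funpow.simps)
  then show ?case
    using Suc.prems(1) ln_mono[of "(ln ^^ j) x" "exp y"] by simp
qed simp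

lemma two_power_mult_power_le_exp:
  fixes L p K :: nat
  assumes "1 \<le> K"
  shows "real (2 ^ L * K ^ p) + 1 \<le> exp (real (L + 1) + real p * ln (real K))"
proof -
  have "(1::real) * 1 \<le> 2 ^ L * real K ^ p"
    using assms by (intro mult_mono one_le_power) auto
  then have "real (2 ^ L * K ^ p) + 1 \<le> 2 ^ (L + 1) * real K ^ p"
    by (simp add: mult_ac)
  also have "\<dots> = exp (real (L + 1) * ln 2) * exp (real p * ln (real K))"
  proof -
    have "exp (real (L + 1) * ln 2) = 2 ^ (L + 1)"
      by (subst exp_of_nat_mult) simp
    moreover have "exp (real p * ln (real K)) = real K ^ p"
      using assms by (subst exp_of_nat_mult) simp
    ultimately show ?thesis
      by simp
  qed
  also have "\<dots> \<le> exp (real (L + 1)) * exp (real p * ln (real K))"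
    using ln_2_less_1 by (intro mult_right_mono) auto
  finally show ?thesis
    by (simp add: exp_add)
qed

lemma ramsey_bound_two_le_exp:
  assumes "1 \<le> K"
  shows "real (ramsey_bound (Suc (Suc 0)) K m) + 1 \<le> exp ((real m + 2) * (real K * (1 + ln (real K))))"
proof -
  define L where "L = K * m + 1"
  have "real (ramsey_bound (Suc (Suc 0)) K m) + 1 = real (2 ^ L * K ^ L) + 1"
    unfolding L_def by simp
  also have "\<dots> \<le> exp (real (L + 1) + real L * ln (real K))"
    by (rule two_power_mult_power_le_exp[OF assms])
  also have "\<dots> \<le> exp ((real m + 2) * (real K * (1 + ln (real K))))"
  proof -
    have "real (L + 1) \<le> (real m + 2) * real K" "real L \<le> (real m + 2) * real K"
      unfolding L_def using assms by (simp_all add: algebra_simps)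
    then have "real (L + 1) + real L * ln (real K)
        \<le> (real m + 2) * real K + (real m + 2) * real K * ln (real K)"
      using assms by (intro add_mono mult_right_mono) auto
    then show ?thesis
      by (simp add: algebra_simps)
  qed
  finally show ?thesis .
qed

text \<open>
  ramsey_bound (s+1) K m is about K^(L^s) with L below a tower W of height t+1, and W^s is
  again such a tower at s times the argument: one more exponential absorbs everything.
\<close>
lemma ramsey_bound_Suc_le_exp_iter:
  fixes K :: nat and A :: real
  defines "T \<equiv> real K * (1 + ln (real K))"
  assumes K: "1 \<le> K" and A: "1 \<le> A"
    and prev: "real (ramsey_bound (Suc (Suc t)) K m) + 1 \<le> (exp ^^ Suc t) (A * T)"
  shows "real (ramsey_bound (Suc (Suc (Suc t))) K m) + 1
    \<le> (exp ^^ Suc (Suc t)) ((real (Suc (Suc t)) * A + 2) * T)"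
proof -
  define s where "s = Suc (Suc t)"
  define L where "L = ramsey_bound s K m + 1"
  define W where "W = (exp ^^ Suc t) (A * T)"
  have lnK: "0 \<le> ln (real K)"
    using K by simp
  have T: "1 + ln (real K) \<le> T"
    unfolding T_def using K lnK mult_right_mono[of 1 "real K" "1 + ln (real K)"] by auto
  with lnK have T_ge_1: "1 \<le> T"
    by linarith
  have "1 \<le> A * T"
    using A T_ge_1 mult_mono[of 1 A 1 T] by simp
  have LW: "real L \<le> W"
    using prev unfolding L_def W_def s_def by simp
  have "L \<le> L ^ s"
    unfolding s_def L_def by (rule self_le_power) auto
  have "real (ramsey_bound (Suc s) K m) + 1 = real (2 ^ L * K ^ (L ^ s)) + 1"
    unfolding L_def s_def by simp
  also have "\<dots> \<le> exp (real (L + 1) + real (L ^ s) * ln (real K))"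
    by (rule two_power_mult_power_le_exp[OF K])
  also have "\<dots> \<le> exp (2 * T * W ^ s)"
  proof -
    have "real L \<le> real (L ^ s)" "1 \<le> real L" "0 \<le> real (L ^ s) * ln (real K)"
      using \<open>L \<le> L ^ s\<close> lnK unfolding L_def by (simp_all only: of_nat_le_iff) simp_all
    moreover have "real (L ^ s) * 2 * (1 + ln (real K))
        = 2 * real (L ^ s) + 2 * (real (L ^ s) * ln (real K))"
      by (simp add: algebra_simps)
    moreover have "real (L + 1) = real L + 1"
      by simp
    ultimately have "real (L + 1) + real (L ^ s) * ln (real K) \<le> real (L ^ s) * 2 * (1 + ln (real K))"
      by linarith
    also have "\<dots> \<le> W ^ s * 2 * T"
      using T power_mono[OF LW, of s] lnK LW of_nat_0_le_iff[of L] by (intro mult_mono) auto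
    finally show ?thesis
      by (simp add: algebra_simps)
  qed
  also have "\<dots> \<le> exp ((exp ^^ Suc t) ((real s * A + 2) * T))"
  proof -
    have "W ^ s \<le> (exp ^^ Suc t) (real s * (A * T))"
      unfolding W_def using \<open>1 \<le> A * T\<close> by (intro exp_iter_power_le) (auto simp: s_def)
    then have "2 * T * W ^ s \<le> 2 * T * (exp ^^ Suc t) (real s * (A * T))"
      using T_ge_1 by (intro mult_left_mono) auto
    also have "\<dots> \<le> (exp ^^ Suc t) (real s * (A * T) + 2 * T)"
      using T_ge_1 \<open>1 \<le> A * T\<close> by (intro mult_exp_iter_le) auto
    finally show ?thesis
      by (simp add: algebra_simps)
  qed
  finally show ?thesis
    unfolding s_def by simp
qed

lemma ramsey_bound_le_exp_iter:
  "\<exists>A\<ge>1. \<forall>K\<ge>1. real (ramsey_bound (Suc (Suc t)) K m) + 1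
      \<le> (exp ^^ Suc t) (A * (real K * (1 + ln (real K))))"
proof (induction t)
  case 0
  show ?case
    using ramsey_bound_two_le_exp by (intro exI[of _ "real m + 2"]) auto
next
  case (Suc t)
  then obtain A where "1 \<le> A"
    and "\<forall>K\<ge>1. real (ramsey_bound (Suc (Suc t)) K m) + 1 \<le> (exp ^^ Suc t) (A * (real K * (1 + ln (real K))))"
    by blast
  then show ?case
    using ramsey_bound_Suc_le_exp_iter[of _ A]
    by (intro exI[of _ "real (Suc (Suc t)) * A + 2"]) auto
qed

section \<open>Graphs that are 2-locally large\<close>

text \<open>
  nth_in B j is the j-th smallest element of B, counting from 0. The entry (j, r) of
  pattern_colouring r f B is the colour of B minus its top element at the j-th element, the entry
  (j, j) the colour of B minus its j-th element at that element: the shapes of the classes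
  T_x^i for i \<le> r and for i > r.
\<close>
definition pattern_pairs :: "nat \<Rightarrow> (nat \<times> nat) set" where
  "pattern_pairs r = {(j, l). j \<le> r \<and> l \<le> r \<and> (l = j \<or> l = r)}"

definition pattern_colouring :: "nat \<Rightarrow> (nat \<Rightarrow> nat set \<Rightarrow> nat) \<Rightarrow> nat set \<Rightarrow> nat \<times> nat \<Rightarrow> nat" where
  "pattern_colouring r f B = restrict (\<lambda>(j, l). f (nth_in B j) (B - {nth_in B l})) (pattern_pairs r)"

lemma finite_pattern_pairs: "finite (pattern_pairs r)"
  unfolding pattern_pairs_def by (rule finite_subset[of _ "{..r} \<times> {..r}"]) auto

lemma card_pattern_pairs_le: "card (pattern_pairs r) \<le> 2 * r + 1"
proof -
  have "pattern_pairs r \<subseteq> (\<lambda>j. (j, j)) ` {..r} \<union> (\<lambda>j. (j, r)) ` {..<r}"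
    unfolding pattern_pairs_def by (auto simp: image_iff le_neq_implies_less)
  then have "card (pattern_pairs r) \<le> card ((\<lambda>j. (j, j)) ` {..r} \<union> (\<lambda>j. (j, r)) ` {..<r})"
    by (intro card_mono) auto
  also have "\<dots> \<le> card ((\<lambda>j. (j, j)) ` {..r}) + card ((\<lambda>j. (j, r)) ` {..<r})"
    by (rule card_Un_le)
  also have "\<dots> \<le> card {..r} + card {..<r}"
    by (intro add_mono card_image_le) auto
  finally show ?thesis
    by simp
qed

lemma pattern_colouring_in_PiE:
  assumes "local_coloring n r V E k f" "B \<subseteq> {..<n}" "card B = Suc r"
  shows "pattern_colouring r f B \<in> pattern_pairs r \<rightarrow>\<^sub>E {1..k}"
proof -
  have "finite B"
    using assms(2) finite_subset by blast
  have "f (nth_in B j) (B - {nth_in B l}) \<in> {1..k}" if "(j, l) \<in> pattern_pairs r" for j l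
  proof -
    have "nth_in B j \<in> B" "nth_in B l \<in> B"
      using that nth_in_mem[OF \<open>finite B\<close>] assms(3) unfolding pattern_pairs_def by auto
    then have "nth_in B j < n" "B - {nth_in B l} \<subseteq> {..<n}" "card (B - {nth_in B l}) = r"
      using assms(2,3) \<open>finite B\<close> by auto
    then show ?thesis
      using assms(1) unfolding local_coloring_def by blast
  qed
  then show ?thesis
    unfolding pattern_colouring_def by auto
qed

lemma pattern_colouring_insert_top:
  assumes "finite e" "card e = r" "u \<in> e" "\<forall>y\<in>e. y < t"
  shows "f u e = pattern_colouring r f (insert t e) (rank_in e u, r)"
proof -
  let ?B = "insert t e"
  have "t \<notin> e" "finite ?B"
    using assms(1,4) by auto
  have "{y\<in>?B. y < u} = {y\<in>e. y < u}"
    using assms(3,4) by force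
  then have "rank_in ?B u = rank_in e u"
    unfolding rank_in_def by simp
  then have "nth_in ?B (rank_in e u) = u"
    using nth_in_rank_in[OF \<open>finite ?B\<close>, of u] assms(3) by simp
  moreover have "{y\<in>?B. y < t} = e"
    using assms(4) by auto
  then have "rank_in ?B t = r"
    unfolding rank_in_def using assms(2) by simp
  then have "nth_in ?B r = t"
    using nth_in_rank_in[OF \<open>finite ?B\<close>, of t] by simp
  moreover have "(rank_in e u, r) \<in> pattern_pairs r"
    using rank_in_less_card[OF assms(1,3)] assms(2) unfolding pattern_pairs_def by simp
  ultimately show ?thesis
    unfolding pattern_colouring_def using \<open>t \<notin> e\<close> by simp
qed

lemma pattern_colouring_insert_self:
  assumes "finite e" "card e = r" "u \<notin> e"
  shows "f u e = pattern_colouring r f (insert u e) (rank_in e u, rank_in e u)"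
proof -
  let ?B = "insert u e"
  have "finite ?B"
    using assms(1) by simp
  have "{y\<in>?B. y < u} = {y\<in>e. y < u}"
    by auto
  then have "nth_in ?B (rank_in e u) = u"
    using nth_in_rank_in[OF \<open>finite ?B\<close>, of u] unfolding rank_in_def by simp
  moreover have "(rank_in e u, rank_in e u) \<in> pattern_pairs r"
    using rank_in_le_card[OF assms(1)] assms(2) unfolding pattern_pairs_def by simp
  ultimately show ?thesis
    unfolding pattern_colouring_def using assms(3) by simp
qed

lemma order_embedding_below_top:
  fixes Z :: "nat set" and \<sigma> :: "'a \<Rightarrow> nat"
  assumes "finite Z" "card V < card Z" "bij_betw \<sigma> V {1..card V}"
  obtains \<phi> t where "inj_on \<phi> V" "\<phi> ` V \<subseteq> Z" "t \<in> Z" "\<forall>v\<in>V. \<phi> v < t"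
    "\<forall>v\<in>V. \<forall>x\<in>V. \<sigma> v < \<sigma> x \<longleftrightarrow> \<phi> v < \<phi> x"
proof
  let ?\<phi> = "\<lambda>v. nth_in Z (\<sigma> v - 1)" and ?t = "nth_in Z (card V)"
  have \<sigma>: "\<sigma> v \<in> {1..card V}" if "v \<in> V" for v
    using assms(3) that by (auto simp: bij_betw_def)
  then have \<phi>: "?\<phi> v \<in> Z" "rank_in Z (?\<phi> v) = \<sigma> v - 1" if "v \<in> V" for v
    using that assms(2) nth_in_mem[OF assms(1)] rank_in_nth_in[OF assms(1)] by fastforce+
  have t: "?t \<in> Z" "rank_in Z ?t = card V"
    using assms(2) nth_in_mem[OF assms(1)] rank_in_nth_in[OF assms(1)] by auto
  have order: "\<sigma> v < \<sigma> x \<longleftrightarrow> ?\<phi> v < ?\<phi> x" if "v \<in> V" "x \<in> V" for v x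
    using rank_in_less_iff[OF assms(1) \<phi>(1)[OF that(1)] \<phi>(1)[OF that(2)]] \<phi>(2) \<sigma> that by force
  show "\<forall>v\<in>V. \<forall>x\<in>V. \<sigma> v < \<sigma> x \<longleftrightarrow> ?\<phi> v < ?\<phi> x"
    using order by blast
  show "inj_on ?\<phi> V"
  proof (rule inj_onI)
    fix v x assume "v \<in> V" "x \<in> V" "?\<phi> v = ?\<phi> x"
    then have "\<not> \<sigma> v < \<sigma> x" "\<not> \<sigma> x < \<sigma> v"
      using order by auto
    then have "\<sigma> v = \<sigma> x"
      by linarith
    then show "v = x"
      using assms(3) \<open>v \<in> V\<close> \<open>x \<in> V\<close> by (auto simp: bij_betw_def inj_on_def)
  qed
  show "?\<phi> ` V \<subseteq> Z" "?t \<in> Z"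
    using \<phi>(1) t(1) by auto
  show "\<forall>v\<in>V. ?\<phi> v < ?t"
    using rank_in_less_iff[OF assms(1) \<phi>(1) t(1)] \<phi>(2) t(2) \<sigma> by fastforce
qed

lemma T_set_monochromatic:
  assumes H: "r_graph r V E" and \<phi>: "inj_on \<phi> V" "\<phi> ` V \<subseteq> Z"
    and t: "t \<in> Z" "\<forall>v\<in>V. \<phi> v < t"
    and x: "x \<in> V" "\<forall>v\<in>V. \<sigma> v < \<sigma> x \<longleftrightarrow> \<phi> v < \<phi> x"
    and hom: "\<forall>B. B \<subseteq> Z \<and> card B = Suc r \<longrightarrow> pattern_colouring r f B = c"
  shows "\<exists>p. \<forall>e\<in>T_set r \<sigma> E x i. f (\<phi> x) (\<phi> ` e) = c p"
proof -
  have image: "finite (\<phi> ` e)" "card (\<phi> ` e) = r" "\<phi> ` e \<subseteq> Z"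
    "rank_in (\<phi> ` e) (\<phi> x) = card {v\<in>e. \<sigma> v < \<sigma> x}" if "e \<in> E" for e
  proof -
    have "e \<subseteq> V" "card e = r" "finite V"
      using H that unfolding r_graph_def by auto
    then show "finite (\<phi> ` e)" "card (\<phi> ` e) = r" "\<phi> ` e \<subseteq> Z"
      "rank_in (\<phi> ` e) (\<phi> x) = card {v\<in>e. \<sigma> v < \<sigma> x}"
      using \<phi> rank_in_image[OF \<phi>(1) _ x] by (auto simp: card_image inj_on_subset intro: finite_subset)
  qed
  show ?thesis
  proof (cases "i \<le> r")
    case True
    have "f (\<phi> x) (\<phi> ` e) = c (i - 1, r)" if "e \<in> T_set r \<sigma> E x i" for e
    proof -
      have e: "e \<in> E" "x \<in> e" "card {v\<in>e. \<sigma> v < \<sigma> x} + 1 = i"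
        using that True unfolding T_set_def by auto
      have "\<forall>y\<in>\<phi> ` e. y < t"
        using e(1) H t(2) unfolding r_graph_def by auto
      then have "f (\<phi> x) (\<phi> ` e) = pattern_colouring r f (insert t (\<phi> ` e)) (rank_in (\<phi> ` e) (\<phi> x), r)"
        using pattern_colouring_insert_top[OF image(1,2)[OF e(1)] imageI[OF e(2)]] by blast
      moreover have "rank_in (\<phi> ` e) (\<phi> x) = i - 1"
        using image(4)[OF e(1)] e(3) by simp
      moreover have "t \<notin> \<phi> ` e"
        using \<open>\<forall>y\<in>\<phi> ` e. y < t\<close> by blast
      then have "insert t (\<phi> ` e) \<subseteq> Z" "card (insert t (\<phi> ` e)) = Suc r"
        using image[OF e(1)] t by auto
      ultimately show ?thesis
        using hom by simp
    qed
    then show ?thesis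
      by blast
  next
    case False
    have "f (\<phi> x) (\<phi> ` e) = c (i - r - 1, i - r - 1)" if "e \<in> T_set r \<sigma> E x i" for e
    proof -
      have e: "e \<in> E" "x \<notin> e" "card {v\<in>e. \<sigma> v < \<sigma> x} + 1 = i - r"
        using that False unfolding T_set_def by auto
      have "\<phi> x \<notin> \<phi> ` e"
        using e(1,2) H \<phi>(1) x(1) unfolding r_graph_def by (auto simp: inj_on_def)
      then have "f (\<phi> x) (\<phi> ` e) = pattern_colouring r f (insert (\<phi> x) (\<phi> ` e))
          (rank_in (\<phi> ` e) (\<phi> x), rank_in (\<phi> ` e) (\<phi> x))"
        using pattern_colouring_insert_self[OF image(1,2)[OF e(1)]] by blast
      moreover have "rank_in (\<phi> ` e) (\<phi> x) = i - r - 1"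
        using image(4)[OF e(1)] e(3) by simp
      moreover have "insert (\<phi> x) (\<phi> ` e) \<subseteq> Z" "card (insert (\<phi> x) (\<phi> ` e)) = Suc r"
        using image[OF e(1)] \<phi>(2) x(1) \<open>\<phi> x \<notin> \<phi> ` e\<close> by auto
      ultimately show ?thesis
        using hom by simp
    qed
    then show ?thesis
      by blast
  qed
qed

lemma two_locally_large_size_bound:
  assumes H: "r_graph r V E" "two_locally_large r V E"
    and lc: "local_coloring n r V E k f" and k: "1 \<le> k"
  shows "n < ramsey_bound (Suc r) (k ^ (2 * r + 1)) (card V + 1)"
proof (rule ccontr)
  assume big: "\<not> ?thesis"
  let ?C = "pattern_pairs r \<rightarrow>\<^sub>E {1..k}"
  have "finite ?C"
    by (simp add: finite_PiE finite_pattern_pairs)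
  moreover have "card ?C \<le> k ^ (2 * r + 1)"
    using power_increasing[OF card_pattern_pairs_le k] by (simp add: card_PiE finite_pattern_pairs)
  moreover have "1 \<le> k ^ (2 * r + 1)"
    using k by simp
  ultimately have "\<exists>Z\<subseteq>{..<n}. card Z = card V + 1 \<and>
      (\<exists>c. \<forall>B. B \<subseteq> Z \<and> card B = Suc r \<longrightarrow> pattern_colouring r f B = c)"
    using big pattern_colouring_in_PiE[OF lc] by (intro ramsey_hypergraph) auto
  then obtain Z c where Z: "Z \<subseteq> {..<n}" "card Z = card V + 1"
    and hom: "\<forall>B. B \<subseteq> Z \<and> card B = Suc r \<longrightarrow> pattern_colouring r f B = c"
    by blast
  have "finite Z"
    using Z(1) finite_subset by blast
  obtain \<sigma> where \<sigma>: "bij_betw \<sigma> V {1..card V}"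
    and large: "\<forall>x\<in>V. \<exists>i\<in>{1..2*r+1}. 2 \<le> card (T_set r \<sigma> E x i)"
    using H(2) unfolding two_locally_large_def by blast
  obtain \<phi> t where \<phi>: "inj_on \<phi> V" "\<phi> ` V \<subseteq> Z" and t: "t \<in> Z" "\<forall>v\<in>V. \<phi> v < t"
    and order: "\<forall>v\<in>V. \<forall>x\<in>V. \<sigma> v < \<sigma> x \<longleftrightarrow> \<phi> v < \<phi> x"
    using order_embedding_below_top[OF \<open>finite Z\<close> _ \<sigma>] Z(2) by auto
  obtain x where x: "x \<in> V" and inj: "inj_on (f (\<phi> x)) ((\<lambda>e. \<phi> ` e) ` E)"
    using lc \<phi> Z(1) unfolding local_coloring_def by blast
  obtain i where "2 \<le> card (T_set r \<sigma> E x i)"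
    using large x by blast
  moreover have "finite (T_set r \<sigma> E x i)"
    using r_graph_finite_edges[OF H(1)] unfolding T_set_def by auto
  ultimately obtain e1 e2 where e: "e1 \<in> T_set r \<sigma> E x i" "e2 \<in> T_set r \<sigma> E x i" "e1 \<noteq> e2"
    using card_le_Suc0_iff_eq[of "T_set r \<sigma> E x i"] by auto
  have E: "e1 \<in> E" "e2 \<in> E" "e1 \<subseteq> V" "e2 \<subseteq> V"
    using e H(1) unfolding T_set_def r_graph_def by (auto split: if_splits)
  obtain p where "\<forall>e\<in>T_set r \<sigma> E x i. f (\<phi> x) (\<phi> ` e) = c p"
    using T_set_monochromatic[OF H(1) \<phi> t x] order x hom by blast
  then have "f (\<phi> x) (\<phi> ` e1) = f (\<phi> x) (\<phi> ` e2)"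
    using e by simp
  then have "\<phi> ` e1 = \<phi> ` e2"
    using inj E(1,2) by (auto dest: inj_onD)
  then show False
    using e(3) E(3,4) \<phi>(1) by (simp add: inj_on_image_eq_iff)
qed

section \<open>The lower bound\<close>

lemma local_coloring_exists:
  assumes "V \<noteq> {}" "\<forall>e\<in>E. e \<subseteq> V"
  shows "\<exists>k f. local_coloring n r V E k f"
proof -
  define S where "S = Pow {..<n}"
  obtain g where g: "bij_betw g {0..<card S} S"
    using ex_bij_betw_nat_finite[of S] unfolding S_def by blast
  define f where "f v e = inv_into {0..<card S} g e + 1" for v :: nat and e
  have "local_coloring n r V E (card S) f"
    unfolding local_coloring_def
  proof (intro conjI allI impI)
    fix v e assume "e \<subseteq> {..<n} \<and> card e = r"
    then have "e \<in> S"
      unfolding S_def by simp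
    then have "e \<in> g ` {0..<card S}"
      using g by (simp add: bij_betw_def)
    then have "inv_into {0..<card S} g e \<in> {0..<card S}"
      by (rule inv_into_into)
    then show "f v e \<in> {1..card S}"
      unfolding f_def by auto
  next
    fix \<phi> assume "inj_on \<phi> V \<and> \<phi> ` V \<subseteq> {..<n}"
    have "inj_on (inv_into {0..<card S} g) S"
      using g by (simp add: bij_betw_def inj_on_inv_into)
    then have inj: "inj_on (f v) S" for v
      unfolding f_def inj_on_def by simp
    have "(\<lambda>e. \<phi> ` e) ` E \<subseteq> S"
      using \<open>inj_on \<phi> V \<and> \<phi> ` V \<subseteq> {..<n}\<close> assms(2) unfolding S_def by blast
    then have "inj_on (f v) ((\<lambda>e. \<phi> ` e) ` E)" for v
      by (rule inj_on_subset[OF inj])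
    then show "\<exists>u\<in>\<phi> ` V. inj_on (f u) ((\<lambda>e. \<phi> ` e) ` E)"
      using assms(1) by blast
  qed
  then show ?thesis
    by (intro exI)
qed

lemma local_coloring_C_num:
  assumes "r_graph r V E" "V \<noteq> {}"
  shows "\<exists>f. local_coloring n r V E (C_num r n V E) f"
proof -
  have "\<forall>e\<in>E. e \<subseteq> V"
    using assms(1) unfolding r_graph_def by simp
  then have "\<exists>k f. local_coloring n r V E k f"
    by (rule local_coloring_exists[OF assms(2)])
  then show ?thesis
    unfolding C_num_def by (rule LeastI_ex)
qed

lemma local_coloring_ge_one:
  assumes "local_coloring n r V E k f" "r < n"
  shows "1 \<le> k"
proof -
  have "f 0 {..<r} \<in> {1..k}"
    using assms unfolding local_coloring_def by auto
  then show ?thesis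
    by simp
qed

lemma ln_iter_ge_one:
  assumes "(exp ^^ Suc r) 1 \<le> x" "i \<le> Suc r"
  shows "1 \<le> (ln ^^ i) (x::real)"
proof (rule ln_iter_ge)
  have "1 \<le> (exp ^^ (Suc r - i)) (1::real)"
    using exp_iter_ge_add[of 1 "Suc r - i"] by linarith
  then have "(exp ^^ i) 1 \<le> (exp ^^ i) ((exp ^^ (Suc r - i)) (1::real))"
    by (rule exp_iter_mono)
  also have "\<dots> = (exp ^^ Suc r) 1"
    using assms(2) funpow_add[of i "Suc r - i" exp] by (metis comp_apply le_add_diff_inverse)
  finally show "(exp ^^ i) 1 \<le> x"
    using assms(1) by linarith
qed

lemma ln_iter_le_of_le_exp_iter:
  assumes "(exp ^^ Suc r) 1 \<le> x" "x \<le> (exp ^^ r) y"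
  shows "(ln ^^ r) (x::real) \<le> y"
proof (rule ln_iter_le[OF _ assms(2)], intro allI impI)
  fix i assume "i < r"
  then have "1 \<le> (ln ^^ i) x"
    by (intro ln_iter_ge_one[OF assms(1)]) simp
  then show "0 < (ln ^^ i) x"
    by simp
qed

lemma power_mult_one_plus_ln_le:
  assumes "1 \<le> k"
  shows "real (k ^ (2*r+1)) * (1 + ln (real (k ^ (2*r+1)))) \<le> (2 * real r + 2) * real k ^ (2*r+2)"
proof -
  have "ln (real (k ^ (2*r+1))) = real (2*r+1) * ln (real k)"
    unfolding of_nat_power by (rule ln_realpow)
  also have "\<dots> \<le> real (2*r+1) * (real k - 1)"
    using assms ln_le_minus_one[of "real k"] by (intro mult_left_mono) auto
  finally have "1 + ln (real (k ^ (2*r+1))) \<le> (2 * real r + 2) * real k"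
    using assms by (simp add: algebra_simps)
  then have "real (k ^ (2*r+1)) * (1 + ln (real (k ^ (2*r+1))))
      \<le> real (k ^ (2*r+1)) * ((2 * real r + 2) * real k)"
    by (intro mult_left_mono) auto
  then show ?thesis
    by (simp add: algebra_simps)
qed

lemma powr_ratio_le:
  fixes y z D k :: real and q :: nat
  assumes "0 \<le> y" "1 \<le> z" "0 < D" "0 \<le> k" "0 < q" "y \<le> D * k ^ q"
  shows "1 / D powr (1 / q) * (y / z) powr (1 / q) \<le> k"
proof -
  have "y / z \<le> y"
    using assms(1,2) by (simp add: divide_le_eq mult_le_cancel_left1)
  then have "(y / z) powr (1 / q) \<le> (D * k ^ q) powr (1 / q)"
    using assms by (intro powr_mono2) auto
  also have "\<dots> = D powr (1 / q) * (k ^ q) powr (1 / q)"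
    using assms(3,4) by (simp add: powr_mult)
  also have "(k ^ q) powr (1 / q) = k"
  proof (cases "k = 0")
    case False
    then have "(k ^ q) powr (1 / q) = k powr (real q * (1 / q))"
      using assms(4) by (simp add: powr_powr flip: powr_realpow)
    then show ?thesis
      using False assms(4,5) by simp
  qed (use assms(5) in simp)
  finally show ?thesis
    using assms(3) by (simp add: field_simps)
qed

lemma iter_log_le_C_num_power:
  assumes "1 \<le> r" "1 \<le> h"
  shows "\<exists>D>0. \<forall>V E n. r_graph r V E \<and> card V = h \<and> two_locally_large r V E \<and>
      (exp ^^ Suc r) 1 \<le> real n \<longrightarrow> iter_log r (real n) \<le> D * real (C_num r n V E) ^ (r + 1)^2"
proof -
  obtain t where r: "r = Suc t"
    using assms(1) by (cases r) auto
  obtain A where A: "1 \<le> A" "\<forall>K\<ge>1. real (ramsey_bound (Suc r) K (h + 1)) + 1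
      \<le> (exp ^^ r) (A * (real K * (1 + ln (real K))))"
    using ramsey_bound_le_exp_iter[of t "h + 1"] r by auto
  show ?thesis
  proof (intro exI[of _ "A * (2 * real r + 2)"] conjI allI impI)
    show "0 < A * (2 * real r + 2)"
      using A(1) by simp
    fix V E n
    assume H: "r_graph r V E \<and> card V = h \<and> two_locally_large r V E \<and> (exp ^^ Suc r) 1 \<le> real n"
    define k where "k = C_num r n V E"
    define K where "K = k ^ (2 * r + 1)"
    have "V \<noteq> {}"
      using H assms(2) by auto
    then obtain f where f: "local_coloring n r V E k f"
      using local_coloring_C_num H unfolding k_def by blast
    have "real (Suc r) \<le> real n"
      using H exp_iter_ge_add[of 1 "Suc r"] by linarith
    then have k: "1 \<le> k"
      using local_coloring_ge_one[OF f] by simp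
    have "n < ramsey_bound (Suc r) K (h + 1)"
      using two_locally_large_size_bound[OF _ _ f k] H unfolding K_def by blast
    then have "real n + 1 \<le> real (ramsey_bound (Suc r) K (h + 1)) + 1"
      by simp
    moreover have "1 \<le> K"
      using k unfolding K_def by simp
    ultimately have "real n \<le> (exp ^^ r) (A * (real K * (1 + ln (real K))))"
      using A(2) by fastforce
    then have "iter_log r (real n) \<le> A * (real K * (1 + ln (real K)))"
      unfolding iter_log_def using H ln_iter_le_of_le_exp_iter by blast
    also have "\<dots> \<le> A * ((2 * real r + 2) * real k ^ (2 * r + 2))"
      using power_mult_one_plus_ln_le[OF k] A(1) unfolding K_def by (intro mult_left_mono) auto
    also have "\<dots> \<le> A * ((2 * real r + 2) * real k ^ (r + 1)^2)"
      using k A(1) assms(1) by (intro mult_left_mono power_increasing) (auto simp: power2_eq_square)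
    finally show "iter_log r (real n) \<le> A * (2 * real r + 2) * real (C_num r n V E) ^ (r + 1)^2"
      unfolding k_def by (simp add: mult.assoc)
  qed
qed

lemma C_num_lower_bound:
  assumes "r \<ge> 1" "h \<ge> 1"
  shows "\<exists>c>0. \<exists>N. \<forall>V E. r_graph r V E \<and> card V = h \<and> two_locally_large r V E \<longrightarrow>
           (\<forall>n\<ge>N. real (C_num r n V E) \<ge>
              c * (iter_log r (real n) / iter_log (r + 1) (real n)) powr (1 / real ((r + 1)^2)))"
proof -
  obtain D where D: "0 < D" and bound: "\<forall>V E n. r_graph r V E \<and> card V = h \<and>
      two_locally_large r V E \<and> (exp ^^ Suc r) 1 \<le> real n \<longrightarrow>
      iter_log r (real n) \<le> D * real (C_num r n V E) ^ (r + 1)^2"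
    using iter_log_le_C_num_power[OF assms] by blast
  show ?thesis
  proof (intro exI[of _ "1 / D powr (1 / real ((r + 1)^2))"] conjI
      exI[of _ "nat \<lceil>(exp ^^ Suc r) (1::real)\<rceil>"] allI impI)
    show "0 < 1 / D powr (1 / real ((r + 1)^2))"
      using D by simp
    fix V E n assume H: "r_graph r V E \<and> card V = h \<and> two_locally_large r V E"
      and "nat \<lceil>(exp ^^ Suc r) (1::real)\<rceil> \<le> n"
    then have n: "(exp ^^ Suc r) 1 \<le> real n"
      by linarith
    then have "1 \<le> iter_log r (real n)" "1 \<le> iter_log (r + 1) (real n)"
      unfolding iter_log_def using ln_iter_ge_one[OF n, of r] ln_iter_ge_one[OF n, of "r + 1"] by simp_all
    then show "1 / D powr (1 / real ((r + 1)^2)) * (iter_log r (real n) / iter_log (r + 1) (real n))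
        powr (1 / real ((r + 1)^2)) \<le> real (C_num r n V E)"
      using bound H n D by (intro powr_ratio_le) auto
  qed
qed

theorem theorem8:
  fixes r h :: nat
  assumes "r \<ge> 1" "h \<ge> 1"
  shows "(\<forall>V E. r_graph r V E \<and> card V = h \<and> \<not> two_locally_large r V E \<longrightarrow>
            (\<forall>n. C_num r n V E \<le> 2 * r + 1))
       \<and> (\<exists>c>0. \<exists>N. \<forall>V E. r_graph r V E \<and> card V = h \<and> two_locally_large r V E \<longrightarrow>
            (\<forall>n\<ge>N. real (C_num r n V E) \<ge>
               c * (iter_log r (real n) / iter_log (r + 1) (real n)) powr (1 / real ((r + 1)^2))))"
  using C_num_le_if_not_two_locally_large C_num_lower_bound[OF assms] by blast

end
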